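(* Let $m\ge 1$ be an odd integer divisible by $3$. Then for every $n\in\mathbb{N}=\mathbb{Z}_{\ge 0}$, the friendship graph $F_n$ is $\mathbb{Z}_m$-cordial.
   Context: Graphs are finite, simple and undirected. For $n\in\mathbb{N}$, the friendship graph $F_n$ is the union of $n$ copies of the triangle $C_3$ joined at a single common (central) vertex (so $F_0$ is a single vertex). For an abelian group $A$ and a graph $G=(V,E)$, a vertex labeling $\ell:V\to A$ induces an edge labeling $\ell(\{v_1,v_2\})=\ell(v_1)+\ell(v_2)$. Let $f_V(a)=|\{v\in V:\ell(v)=a\}|$ and $f_E(a)=|\{e\in E:\ell(e)=a\}|$. The labeling is $A$-cordial if $|f_V(a_1)-f_V(a_2)|\le 1$ and $|f_E(a_1)-f_E(a_2)|\le 1$ for all $a_1,a_2\in A$; $G$ is $A$-cordial if it admits an $A$-cordial labeling. *)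

theory Defs
  imports "HOL-Algebra.Elementary_Groups"
begin

text \<open>A vertex labeling l : V -> carrier A induces the edge labeling
  l {v1,v2} = l v1 + l v2 (the group operation of A, written multiplicatively
  in HOL-Algebra).\<close>

definition vertex_count :: "('b, 'c) monoid_scheme \<Rightarrow> 'a set \<Rightarrow> ('a \<Rightarrow> 'b) \<Rightarrow> 'b \<Rightarrow> nat" where
  "vertex_count A V l a = card {v \<in> V. l v = a}"

definition edge_count :: "('b, 'c) monoid_scheme \<Rightarrow> 'a set set \<Rightarrow> ('a \<Rightarrow> 'b) \<Rightarrow> 'b \<Rightarrow> nat" where
  "edge_count A E l a = card {e \<in> E. \<exists>x y. e = {x, y} \<and> x \<noteq> y \<and> l x \<otimes>\<^bsub>A\<^esub> l y = a}"

definition cordial_labeling :: "('b, 'c) monoid_scheme \<Rightarrow> 'a set \<Rightarrow> 'a set set \<Rightarrow> ('a \<Rightarrow> 'b) \<Rightarrow> bool" where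
  "cordial_labeling A V E l \<longleftrightarrow>
     (\<forall>v\<in>V. l v \<in> carrier A) \<and>
     (\<forall>a1\<in>carrier A. \<forall>a2\<in>carrier A.
        \<bar>int (vertex_count A V l a1) - int (vertex_count A V l a2)\<bar> \<le> 1 \<and>
        \<bar>int (edge_count A E l a1) - int (edge_count A E l a2)\<bar> \<le> 1)"

definition is_cordial :: "('b, 'c) monoid_scheme \<Rightarrow> 'a set \<Rightarrow> 'a set set \<Rightarrow> bool" where
  "is_cordial A V E \<longleftrightarrow> (\<exists>l. cordial_labeling A V E l)"

definition friendship_vertices :: "nat \<Rightarrow> nat set" where
  "friendship_vertices n = {0..2*n}"

definition friendship_edges :: "nat \<Rightarrow> nat set set" where
  "friendship_edges n = (\<Union>i<n. {{0, 2*i+1}, {0, 2*i+2}, {2*i+1, 2*i+2}})"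

end

theory Submission
  imports Defs
begin

(* Label the centre of F_n by 0 and the two outer vertices of the i-th triangle by a pair of
   labels.  Since m is odd, t |-> 2t is a bijection of Z_m, so m further triangles labelled
   (t, t), t in Z_m, add 2 to every vertex count and 3 to every edge count; hence it suffices
   to treat n < m.  Write m = 3k with k odd and every label as 3x + c with c in {0,1,2}.  For
   n < m the labeling is a concatenation of a few blocks of triangles on each of which both
   labels keep a fixed residue c while x runs through an arithmetic progression of difference
   0, 1, -1, 2 or -2.  Every count is then a sum of indicators of linear conditions on x and
   its parity, which arithmetic decides. *)

definition friendship_labeling :: "(nat \<Rightarrow> int \<times> int) \<Rightarrow> nat \<Rightarrow> int" where
  "friendship_labeling L v =
     (if v = 0 then 0 else if odd v then fst (L (v div 2)) else snd (L (v div 2 - 1)))"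

lemma friendship_labeling_simps [simp]:
  "friendship_labeling L 0 = 0"
  "friendship_labeling L (Suc (2 * i)) = fst (L i)"
  "friendship_labeling L (Suc (Suc (2 * i))) = snd (L i)"
  by (simp_all add: friendship_labeling_def)

definition vertex_tally :: "(nat \<Rightarrow> int \<times> int) \<Rightarrow> nat \<Rightarrow> int \<Rightarrow> nat" where
  "vertex_tally L n a = of_bool (a = 0) + (\<Sum>i<n. of_bool (fst (L i) = a) + of_bool (snd (L i) = a))"

definition edge_tally :: "nat \<Rightarrow> (nat \<Rightarrow> int \<times> int) \<Rightarrow> nat \<Rightarrow> int \<Rightarrow> nat" where
  "edge_tally m L n a =
     (\<Sum>i<n. of_bool (fst (L i) = a) + of_bool (snd (L i) = a)
              + of_bool ((fst (L i) + snd (L i)) mod int m = a))"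

lemma card_filter_eq_sum: "finite A \<Longrightarrow> card {x \<in> A. P x} = (\<Sum>x\<in>A. of_bool (P x))"
  by (simp add: Int_def conj_commute)

lemma vertex_count_friendship_labeling:
  "vertex_count A (friendship_vertices n) (friendship_labeling L) a = vertex_tally L n a"
proof -
  let ?g = "\<lambda>v. of_bool (friendship_labeling L v = a) :: nat"
  have "vertex_count A (friendship_vertices n) (friendship_labeling L) a = (\<Sum>v\<le>2 * n. ?g v)"
    unfolding vertex_count_def friendship_vertices_def atLeast0AtMost
    by (rule card_filter_eq_sum) simp
  also have "\<dots> = ?g 0 + (\<Sum>v<n * 2. ?g (Suc v))"
    by (simp add: sum.atMost_shift mult.commute)
  also have "(\<Sum>v<n * 2. ?g (Suc v)) = (\<Sum>i<n. ?g (Suc (2 * i)) + ?g (2 * i + 2))"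
    by (simp flip: sum.nat_group add: mult.commute del: sum_of_bool_eq)
  finally show ?thesis
    by (simp add: vertex_tally_def)
qed

definition triangle_edges :: "nat \<Rightarrow> nat set set" where
  "triangle_edges i = {{0, 2 * i + 1}, {0, 2 * i + 2}, {2 * i + 1, 2 * i + 2}}"

lemma edge_count_friendship_labeling:
  assumes "\<And>i. i < n \<Longrightarrow> fst (L i) \<in> {0..<int m} \<and> snd (L i) \<in> {0..<int m}"
  shows "edge_count (integer_mod_group m) (friendship_edges n) (friendship_labeling L) a =
           edge_tally m L n a"
proof -
  let ?l = "friendship_labeling L"
  let ?g = "\<lambda>e. of_bool (\<exists>u w. e = {u, w} \<and> u \<noteq> w \<and> (?l u + ?l w) mod int m = a) :: nat"
  have edge: "?g {u, w} = of_bool ((?l u + ?l w) mod int m = a)" if "u \<noteq> w" for u w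
    using that by (auto simp: doubleton_eq_iff add.commute)
  have "edge_count (integer_mod_group m) (friendship_edges n) ?l a = (\<Sum>e\<in>friendship_edges n. ?g e)"
    unfolding edge_count_def mult_integer_mod_group
    by (rule card_filter_eq_sum) (simp add: friendship_edges_def)
  also have "\<dots> = (\<Sum>i<n. \<Sum>e\<in>triangle_edges i. ?g e)"
    unfolding friendship_edges_def triangle_edges_def
    by (rule sum.UNION_disjoint) (auto simp: doubleton_eq_iff)
  also have "\<dots> = edge_tally m L n a"
    unfolding edge_tally_def
  proof (rule sum.cong)
    fix i assume "i \<in> {..<n}"
    then have "fst (L i) mod int m = fst (L i)" "snd (L i) mod int m = snd (L i)"
      using assms[of i] by auto
    moreover have "(\<Sum>e\<in>triangle_edges i. ?g e) =
                     ?g {0, 2 * i + 1} + ?g {0, 2 * i + 2} + ?g {2 * i + 1, 2 * i + 2}"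
      by (simp add: triangle_edges_def doubleton_eq_iff del: sum_of_bool_eq)
    ultimately show "(\<Sum>e\<in>triangle_edges i. ?g e) =
        of_bool (fst (L i) = a) + of_bool (snd (L i) = a)
        + of_bool ((fst (L i) + snd (L i)) mod int m = a)"
      by (simp only: edge) simp
  qed simp
  finally show ?thesis .
qed

definition nearly_uniform :: "nat \<Rightarrow> (int \<Rightarrow> nat) \<Rightarrow> bool" where
  "nearly_uniform m f \<longleftrightarrow> (\<exists>q. \<forall>a\<in>{0..<int m}. f a \<in> {q, Suc q})"

lemma nearly_uniform_abs_diff_le:
  assumes "nearly_uniform m f" "a1 \<in> {0..<int m}" "a2 \<in> {0..<int m}"
  shows "\<bar>int (f a1) - int (f a2)\<bar> \<le> 1"
proof -
  obtain q where "\<forall>a\<in>{0..<int m}. f a \<in> {q, Suc q}"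
    using assms(1) unfolding nearly_uniform_def by blast
  then have "f a1 \<in> {q, Suc q}" "f a2 \<in> {q, Suc q}"
    using assms(2,3) by blast+
  then show ?thesis
    by auto
qed

lemma nearly_uniform_shift:
  assumes "nearly_uniform m f" "\<And>a. a \<in> {0..<int m} \<Longrightarrow> g a = f a + d"
  shows "nearly_uniform m g"
  using assms unfolding nearly_uniform_def by (metis add_Suc insert_iff singleton_iff)

definition cordial_triangles :: "nat \<Rightarrow> (nat \<Rightarrow> int \<times> int) \<Rightarrow> nat \<Rightarrow> bool" where
  "cordial_triangles m L n \<longleftrightarrow>
     (\<forall>i<n. fst (L i) \<in> {0..<int m} \<and> snd (L i) \<in> {0..<int m}) \<and>
     nearly_uniform m (vertex_tally L n) \<and> nearly_uniform m (edge_tally m L n)"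

lemma is_cordial_friendship:
  assumes "m \<ge> 1" and cordial: "cordial_triangles m L n"
  shows "is_cordial (integer_mod_group m) (friendship_vertices n) (friendship_edges n)"
proof -
  have range: "\<And>i. i < n \<Longrightarrow> fst (L i) \<in> {0..<int m} \<and> snd (L i) \<in> {0..<int m}"
    using cordial by (simp add: cordial_triangles_def)
  have carrier: "carrier (integer_mod_group m) = {0..<int m}"
    using assms(1) by (simp add: carrier_integer_mod_group)
  have "friendship_labeling L v \<in> {0..<int m}" if "v \<in> friendship_vertices n" for v
  proof -
    consider "v = 0" | i where "v = Suc (2 * i)" | i where "v = Suc (Suc (2 * i))"
      by (metis oddE evenE not0_implies_Suc add.commute plus_1_eq_Suc)
    then show ?thesis
      using that range assms(1) by cases (auto simp: friendship_vertices_def)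
  qed
  then have "cordial_labeling (integer_mod_group m) (friendship_vertices n) (friendship_edges n)
               (friendship_labeling L)"
    using cordial
    by (auto simp: cordial_labeling_def carrier cordial_triangles_def range nearly_uniform_abs_diff_le
        vertex_count_friendship_labeling edge_count_friendship_labeling)
  then show ?thesis
    unfolding is_cordial_def by blast
qed

lemma card_affine_preimage:
  fixes b d x :: int
  assumes "d \<noteq> 0"
  shows "card {t. t < n \<and> b + d * int t = x} =
           of_bool (d dvd (x - b) \<and> 0 \<le> (x - b) div d \<and> (x - b) div d < int n)"
proof -
  have "b + d * int t = x \<longleftrightarrow> d dvd (x - b) \<and> 0 \<le> (x - b) div d \<and> t = nat ((x - b) div d)" for t
  proof
    assume "b + d * int t = x"
    then have "x - b = d * int t" by simp
    then show "d dvd (x - b) \<and> 0 \<le> (x - b) div d \<and> t = nat ((x - b) div d)"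
      using assms by simp
  next
    assume "d dvd (x - b) \<and> 0 \<le> (x - b) div d \<and> t = nat ((x - b) div d)"
    then have "x - b = d * int t" by simp
    then show "b + d * int t = x" by simp
  qed
  then have "{t. t < n \<and> b + d * int t = x} =
      (if d dvd (x - b) \<and> 0 \<le> (x - b) div d \<and> (x - b) div d < int n
       then {nat ((x - b) div d)} else {})"
    by auto
  then show ?thesis
    by simp
qed

lemma of_bool_mod_eq:
  fixes v a M :: int
  assumes "0 \<le> v" "v < 2 * M" "0 \<le> a" "a < M"
  shows "(of_bool (v mod M = a) :: nat) = of_bool (v = a) + of_bool (v = a + M)"
proof (cases "v < M")
  case True
  then show ?thesis using assms by auto
next
  case False
  then have "v mod M = (v - M) mod M"
    using assms by (intro mod_pos_geq) auto
  also have "\<dots> = v - M"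
    using assms False by (intro mod_pos_pos_trivial) auto
  finally have "v mod M = v - M" .
  then show ?thesis using False assms by auto
qed

lemma sum_of_bool_int_eq_one: "0 \<le> a \<Longrightarrow> a < int m \<Longrightarrow> (\<Sum>t<m. of_bool (int t = a)) = (1::nat)"
  using card_affine_preimage[of 1 m 0 a] by (simp add: Int_def lessThan_def)

lemma sum_of_bool_double_mod_eq_one:
  assumes "odd m" "0 \<le> a" "a < int m"
  shows "(\<Sum>t<m. of_bool (2 * int t mod int m = a)) = (1::nat)"
proof -
  have "(\<Sum>t<m. of_bool (2 * int t mod int m = a)) =
        (\<Sum>t<m. of_bool (0 + 2 * int t = a)) + (\<Sum>t<m. (of_bool (0 + 2 * int t = a + int m) :: nat))"
    using assms(2,3) by (simp add: of_bool_mod_eq sum.distrib del: sum_of_bool_eq)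
  also have "\<dots> = of_bool (even a) + of_bool (even (a + int m))"
  proof -
    have "a div 2 < int m" "(a + int m) div 2 < int m"
      using assms(2,3) by linarith+
    then show ?thesis
      using card_affine_preimage[of 2 m 0 a] card_affine_preimage[of 2 m 0 "a + int m"] assms(2)
      by (simp add: Int_def lessThan_def del: even_add)
  qed
  also have "\<dots> = 1"
    using assms(1) by simp
  finally show ?thesis .
qed

lemma sum_lessThan_add:
  fixes f :: "nat \<Rightarrow> 'a::comm_monoid_add"
  shows "(\<Sum>i<n + k. f i) = (\<Sum>i<n. f i) + (\<Sum>i<k. f (n + i))"
  by (induction k) (simp_all add: add.assoc)

lemma sum_lessThan_mult_mod:
  fixes f :: "nat \<Rightarrow> 'a::comm_semiring_1"
  shows "(\<Sum>j<q * m. f (j mod m)) = of_nat q * (\<Sum>t<m. f t)"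
proof -
  have "(\<Sum>j\<in>{i * m..<i * m + m}. f (j mod m)) = (\<Sum>t<m. f t)" for i
    using sum.shift_bounds_nat_ivl[of "\<lambda>j. f (j mod m)" 0 "i * m" m]
    by (simp add: atLeast0LessThan add.commute)
  then show ?thesis
    by (simp flip: sum.nat_group)
qed

definition periodic_extension :: "nat \<Rightarrow> nat \<Rightarrow> (nat \<Rightarrow> int \<times> int) \<Rightarrow> nat \<Rightarrow> int \<times> int" where
  "periodic_extension m r L i =
     (if i < r then L i else (int ((i - r) mod m), int ((i - r) mod m)))"

lemma
  assumes "a \<in> {0..<int m}"
  shows vertex_tally_periodic_extension:
      "vertex_tally (periodic_extension m r L) (r + q * m) a = vertex_tally L r a + 2 * q"
    and edge_tally_periodic_extension:
      "odd m \<Longrightarrow> edge_tally m (periodic_extension m r L) (r + q * m) a = edge_tally m L r a + 3 * q"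
proof -
  let ?E = "periodic_extension m r L"
  have head: "(\<Sum>i<r. f (?E i)) = (\<Sum>i<r. f (L i))" for f :: "int \<times> int \<Rightarrow> nat"
    by (simp add: periodic_extension_def)
  have tail: "(\<Sum>i<q * m. f (?E (r + i))) = q * (\<Sum>t<m. f (int t, int t))" for f :: "int \<times> int \<Rightarrow> nat"
    using sum_lessThan_mult_mod[where f = "\<lambda>t. f (int t, int t)" and q = q and m = m]
    by (simp add: periodic_extension_def)
  have ids: "(\<Sum>t<m. of_bool (int t = a)) = (1::nat)"
    using sum_of_bool_int_eq_one[of a m] assms by simp
  let ?fv = "\<lambda>p. of_bool (fst p = a) + of_bool (snd p = a) :: nat"
  have "vertex_tally ?E (r + q * m) a =
        of_bool (a = 0) + (\<Sum>i<r. ?fv (?E i)) + (\<Sum>i<q * m. ?fv (?E (r + i)))"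
    by (simp add: vertex_tally_def sum_lessThan_add add.assoc del: sum_of_bool_eq)
  also have "\<dots> = vertex_tally L r a + q * (\<Sum>t<m. ?fv (int t, int t))"
    by (simp only: head[of ?fv] tail[of ?fv] vertex_tally_def)
  finally show "vertex_tally ?E (r + q * m) a = vertex_tally L r a + 2 * q"
    by (simp add: sum.distrib ids del: sum_of_bool_eq)
  let ?fe = "\<lambda>p. of_bool (fst p = a) + of_bool (snd p = a)
                 + of_bool ((fst p + snd p) mod int m = a) :: nat"
  have "edge_tally m ?E (r + q * m) a = (\<Sum>i<r. ?fe (?E i)) + (\<Sum>i<q * m. ?fe (?E (r + i)))"
    by (simp add: edge_tally_def sum_lessThan_add del: sum_of_bool_eq)
  also have "\<dots> = edge_tally m L r a + q * (\<Sum>t<m. ?fe (int t, int t))"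
    by (simp only: head[of ?fe] tail[of ?fe] edge_tally_def)
  finally show "edge_tally m ?E (r + q * m) a = edge_tally m L r a + 3 * q" if "odd m"
    using sum_of_bool_double_mod_eq_one[OF that, of a] assms
    by (simp add: sum.distrib ids del: sum_of_bool_eq)
qed

lemma cordial_triangles_periodic_extension:
  assumes "odd m" and "cordial_triangles m L r"
  shows "cordial_triangles m (periodic_extension m r L) (r + q * m)"
proof -
  have "m > 0"
    using assms(1) by (rule odd_pos)
  then have "fst (periodic_extension m r L i) \<in> {0..<int m} \<and> snd (periodic_extension m r L i) \<in> {0..<int m}"
    if "i < r + q * m" for i
    using assms(2) by (auto simp: periodic_extension_def cordial_triangles_def)
  then show ?thesis
    using assms
    by (auto simp: cordial_triangles_def vertex_tally_periodic_extension edge_tally_periodic_extension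
        intro: nearly_uniform_shift)
qed

type_synonym progression = "int \<times> int \<times> int"

fun prog_val :: "progression \<Rightarrow> nat \<Rightarrow> int" where
  "prog_val (g, b, d) t = 3 * (b + d * int t) + g"

fun prog_add :: "progression \<Rightarrow> progression \<Rightarrow> progression" where
  "prog_add (g, b, d) (g', b', d') = ((g + g') mod 3, b + b' + (g + g') div 3, d + d')"

lemma prog_val_add: "prog_val (prog_add p p') t = prog_val p t + prog_val p' t"
  by (cases p; cases p') (simp add: algebra_simps)

definition prog_count :: "progression \<Rightarrow> nat \<Rightarrow> int \<Rightarrow> int \<Rightarrow> nat" where
  "prog_count p n c x = card {t. t < n \<and> prog_val p t = 3 * x + c}"

lemma prog_count_eq_sum: "prog_count p n c x = (\<Sum>t<n. of_bool (prog_val p t = 3 * x + c))"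
  by (simp add: prog_count_def Int_def lessThan_def)

lemma prog_count_eq:
  assumes "0 \<le> g" "g < 3" "0 \<le> c" "c < 3" "d \<noteq> 0"
  shows "prog_count (g, b, d) n c x =
           of_bool (c = g \<and> d dvd (x - b) \<and> 0 \<le> (x - b) div d \<and> (x - b) div d < int n)"
proof -
  have "3 * (b + d * int t) + g = 3 * x + c \<longleftrightarrow> c = g \<and> b + d * int t = x" for t
    using assms by presburger
  then have "prog_count (g, b, d) n c x = (if c = g then card {t. t < n \<and> b + d * int t = x} else 0)"
    by (simp add: prog_count_def)
  then show ?thesis
    using card_affine_preimage[OF assms(5)] by simp
qed

lemma prog_count_slopes:
  assumes "0 \<le> g" "g < 3" "0 \<le> c" "c < 3"
  shows "prog_count (g, b, 0) n c x = (if c = g \<and> x = b then n else 0)"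
    and "prog_count (g, b, 1) n c x = of_bool (c = g \<and> b \<le> x \<and> x < b + int n)"
    and "prog_count (g, b, -1) n c x = of_bool (c = g \<and> b - int n < x \<and> x \<le> b)"
    and "prog_count (g, b, 2) n c x = of_bool (c = g \<and> even (x - b) \<and> b \<le> x \<and> x < b + 2 * int n)"
    and "prog_count (g, b, -2) n c x = of_bool (c = g \<and> even (x - b) \<and> b - 2 * int n < x \<and> x \<le> b)"
proof -
  have "3 * b + g = 3 * x + c \<longleftrightarrow> c = g \<and> x = b"
    using assms by presburger
  then show "prog_count (g, b, 0) n c x = (if c = g \<and> x = b then n else 0)"
    by (simp add: prog_count_def)
qed (use assms in \<open>auto simp: prog_count_eq elim!: evenE\<close>)

type_synonym segment = "nat \<times> progression \<times> progression"

fun seg_labeling :: "segment list \<Rightarrow> nat \<Rightarrow> int \<times> int" where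
  "seg_labeling [] t = (0, 0)"
| "seg_labeling ((n, p, p') # ss) t =
     (if t < n then (prog_val p t, prog_val p' t) else seg_labeling ss (t - n))"

lemma sum_seg_labeling:
  fixes f :: "int \<times> int \<Rightarrow> 'a::comm_monoid_add"
  shows "(\<Sum>t<sum_list (map fst ss). f (seg_labeling ss t)) =
           (\<Sum>(n, p, p')\<leftarrow>ss. \<Sum>t<n. f (prog_val p t, prog_val p' t))"
proof (induction ss)
  case (Cons s ss)
  then show ?case
    by (cases s) (simp add: sum_lessThan_add)
qed simp

lemma seg_labeling_in_segment:
  "t < sum_list (map fst ss) \<Longrightarrow>
     \<exists>(n, p, p')\<in>set ss. \<exists>u<n. seg_labeling ss t = (prog_val p u, prog_val p' u)"
proof (induction ss arbitrary: t)
  case (Cons s ss)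
  then show ?case
    by (cases s) (fastforce split: if_splits)
qed simp

definition seg_vertex_tally :: "segment list \<Rightarrow> int \<Rightarrow> int \<Rightarrow> nat" where
  "seg_vertex_tally ss c x =
     of_bool (x = 0 \<and> c = 0) + (\<Sum>(n, p, p')\<leftarrow>ss. prog_count p n c x + prog_count p' n c x)"

text \<open>The sum of two labels in {0..<3k} lies in {0..<6k}, so it is congruent to 3x + c modulo
  3k iff it equals 3x + c or 3 (x + k) + c.\<close>

definition seg_edge_tally :: "nat \<Rightarrow> segment list \<Rightarrow> int \<Rightarrow> int \<Rightarrow> nat" where
  "seg_edge_tally k ss c x =
     (\<Sum>(n, p, p')\<leftarrow>ss. prog_count p n c x + prog_count p' n c x
        + prog_count (prog_add p p') n c x + prog_count (prog_add p p') n c (x + int k))"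

lemma vertex_tally_seg_labeling:
  assumes "0 \<le> c" "c < 3"
  shows "vertex_tally (seg_labeling ss) (sum_list (map fst ss)) (3 * x + c) = seg_vertex_tally ss c x"
proof -
  have "3 * x + c = 0 \<longleftrightarrow> x = 0 \<and> c = 0"
    using assms by presburger
  then show ?thesis
    using sum_seg_labeling[of "\<lambda>v. of_bool (fst v = 3 * x + c) + of_bool (snd v = 3 * x + c)" ss]
    by (simp add: vertex_tally_def seg_vertex_tally_def prog_count_eq_sum sum.distrib case_prod_unfold
        del: sum_of_bool_eq)
qed

lemma edge_tally_seg_labeling:
  assumes range: "\<And>n p p' t. (n, p, p') \<in> set ss \<Longrightarrow> t < n \<Longrightarrow>
                    prog_val p t \<in> {0..<3 * int k} \<and> prog_val p' t \<in> {0..<3 * int k}"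
    and "0 \<le> c" "c < 3" "0 \<le> x" "x < int k"
  shows "edge_tally (3 * k) (seg_labeling ss) (sum_list (map fst ss)) (3 * x + c) =
           seg_edge_tally k ss c x"
proof -
  have split_mod: "(of_bool ((prog_val p t + prog_val p' t) mod (3 * int k) = 3 * x + c) :: nat) =
      of_bool (prog_val (prog_add p p') t = 3 * x + c)
      + of_bool (prog_val (prog_add p p') t = 3 * (x + int k) + c)"
    if "(n, p, p') \<in> set ss" "t < n" for n p p' t
    using range[OF that] assms(2-5) by (simp add: prog_val_add of_bool_mod_eq algebra_simps)
  let ?f = "\<lambda>v. of_bool (fst v = 3 * x + c) + of_bool (snd v = 3 * x + c)
                  + (of_bool ((fst v + snd v) mod int (3 * k) = 3 * x + c) :: nat)"
  have "edge_tally (3 * k) (seg_labeling ss) (sum_list (map fst ss)) (3 * x + c) =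
        (\<Sum>(n, p, p')\<leftarrow>ss. \<Sum>t<n. ?f (prog_val p t, prog_val p' t))"
    using sum_seg_labeling[of ?f ss] by (simp add: edge_tally_def del: sum_of_bool_eq)
  also have "\<dots> = seg_edge_tally k ss c x"
    unfolding seg_edge_tally_def
  proof (intro arg_cong[where f = sum_list] map_cong refl, clarify)
    fix n p p' assume seg: "(n, p, p') \<in> set ss"
    have "(\<Sum>t<n. ?f (prog_val p t, prog_val p' t)) =
          (\<Sum>t<n. of_bool (prog_val p t = 3 * x + c) + of_bool (prog_val p' t = 3 * x + c)
             + of_bool (prog_val (prog_add p p') t = 3 * x + c)
             + of_bool (prog_val (prog_add p p') t = 3 * (x + int k) + c))"
      by (rule sum.cong) (simp_all add: split_mod[OF seg] del: sum_of_bool_eq prog_val.simps)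
    then show "(\<Sum>t<n. ?f (prog_val p t, prog_val p' t)) =
          prog_count p n c x + prog_count p' n c x + prog_count (prog_add p p') n c x
          + prog_count (prog_add p p') n c (x + int k)"
      by (simp add: prog_count_eq_sum sum.distrib del: sum_of_bool_eq prog_val.simps)
  qed
  finally show ?thesis .
qed

text \<open>The quotient x of a label 3x + c comes with its half y, so that the parity conditions
  produced by progressions of difference 2 or -2 become linear in y.\<close>

lemma cordial_triangles_seg_labeling:
  assumes len: "sum_list (map fst ss) = r"
    and range: "\<And>n p p' t. (n, p, p') \<in> set ss \<Longrightarrow> t < n \<Longrightarrow>
                  prog_val p t \<in> {0..<3 * int k} \<and> prog_val p' t \<in> {0..<3 * int k}"
    and tallies: "\<And>c x y. c \<in> {0, 1, 2} \<Longrightarrow> 0 \<le> y \<Longrightarrow> x \<in> {2 * y, 2 * y + 1} \<Longrightarrow>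
                    x < int k \<Longrightarrow>
                    seg_vertex_tally ss c x \<in> {qv, Suc qv} \<and> seg_edge_tally k ss c x \<in> {qe, Suc qe}"
  shows "cordial_triangles (3 * k) (seg_labeling ss) r"
proof -
  have digits: "a = 3 * (a div 3) + a mod 3" "0 \<le> a mod 3" "a mod 3 < 3" "0 \<le> a div 3" "a div 3 < int k"
    if "a \<in> {0..<int (3 * k)}" for a
    using that by auto
  have tallies': "seg_vertex_tally ss (a mod 3) (a div 3) \<in> {qv, Suc qv} \<and>
                  seg_edge_tally k ss (a mod 3) (a div 3) \<in> {qe, Suc qe}"
    if "a \<in> {0..<int (3 * k)}" for a
    using digits(2-5)[OF that] by (intro tallies[where y = "a div 3 div 2"]) auto
  have "fst (seg_labeling ss t) \<in> {0..<int (3 * k)} \<and> snd (seg_labeling ss t) \<in> {0..<int (3 * k)}"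
    if "t < r" for t
    using seg_labeling_in_segment[of t ss] that len range by fastforce
  moreover have "vertex_tally (seg_labeling ss) r a \<in> {qv, Suc qv}"
    if "a \<in> {0..<int (3 * k)}" for a
    using tallies'[OF that] vertex_tally_seg_labeling[OF digits(2,3)[OF that], of ss "a div 3"] len
    by (simp flip: digits(1)[OF that])
  moreover have "edge_tally (3 * k) (seg_labeling ss) r a \<in> {qe, Suc qe}"
    if "a \<in> {0..<int (3 * k)}" for a
    using tallies'[OF that] edge_tally_seg_labeling[where ss = ss and k = k, OF range digits(2-5)[OF that]] len
    by (simp flip: digits(1)[OF that])
  ultimately show ?thesis
    unfolding cordial_triangles_def nearly_uniform_def by blast
qed

lemma cordial_triangles_upto_k:
  assumes "r \<le> 2 * h + 1"
  shows "cordial_triangles (3 * (2 * h + 1)) (seg_labeling [(r, (1, 0, 1), (2, 0, 1))]) r"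
  by (rule cordial_triangles_seg_labeling[where qv = 0 and qe = 0])
    (use assms in \<open>auto simp: seg_vertex_tally_def seg_edge_tally_def prog_count_slopes of_bool_def
                          split: if_splits\<close>)

lemma cordial_triangles_k_plus_small:
  assumes "s \<le> h"
  shows "cordial_triangles (3 * (2 * h + 1))
           (seg_labeling [(2 * h + 1 - s, (1, int s, 1), (2, int s, 1)),
                          (s, (0, 2 * int s - 1, -2), (1, 0, 1)), (s, (0, 2 * int s, -2), (2, 0, 1))])
           (2 * h + 1 + s)"
  by (rule cordial_triangles_seg_labeling[where qv = 0 and qe = 1])
    (use assms in \<open>auto simp: seg_vertex_tally_def seg_edge_tally_def prog_count_slopes of_bool_def
                          split: if_splits\<close>)

lemma cordial_triangles_k_plus_large:
  assumes "h < s" "s \<le> 2 * h"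
  shows "cordial_triangles (3 * (2 * h + 1))
           (seg_labeling [(s - h, (1, 0, 1), (2, 0, 1)), (h + 1, (1, int h, 1), (2, int h, 1)),
                          (h, (0, 2 * int h, -2), (1, 0, 1)), (h, (0, 2 * int h - 1, -2), (2, 0, 1))])
           (2 * h + 1 + s)"
  by (rule cordial_triangles_seg_labeling[where qv = 1 and qe = 1])
    (use assms in \<open>auto simp: seg_vertex_tally_def seg_edge_tally_def prog_count_slopes of_bool_def
                          split: if_splits\<close>)

lemma cordial_triangles_2k_plus:
  assumes "s \<le> 2 * h"
  shows "cordial_triangles (3 * (2 * h + 1))
           (seg_labeling [(2, (1, 0, 0), (2, 2 * int h, 0)), (s, (1, 1, 1), (2, 0, 1)),
                          (2 * h, (0, 1, 1), (1, 1, 1)), (2 * h, (0, 1, 1), (2, 0, 1))])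
           (2 * (2 * h + 1) + s)"
  by (rule cordial_triangles_seg_labeling[where qv = 1 and qe = 2])
    (use assms in \<open>auto simp: seg_vertex_tally_def seg_edge_tally_def prog_count_slopes of_bool_def
                          split: if_splits\<close>)

lemma cordial_triangles_below_modulus:
  assumes "r < 3 * (2 * h + 1)"
  shows "\<exists>L. cordial_triangles (3 * (2 * h + 1)) L r"
proof -
  consider "r \<le> 2 * h + 1" | "2 * h + 1 < r" "r \<le> 3 * h + 1" | "3 * h + 1 < r" "r < 2 * (2 * h + 1)"
    | "2 * (2 * h + 1) \<le> r"
    by linarith
  then show ?thesis
  proof cases
    case 1
    then show ?thesis
      using cordial_triangles_upto_k by blast
  next
    case 2
    define s where "s = r - (2 * h + 1)"
    have "s \<le> h" "r = 2 * h + 1 + s"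
      using 2 by (auto simp: s_def)
    then show ?thesis
      using cordial_triangles_k_plus_small by blast
  next
    case 3
    define s where "s = r - (2 * h + 1)"
    have "h < s" "s \<le> 2 * h" "r = 2 * h + 1 + s"
      using 3 by (auto simp: s_def)
    then show ?thesis
      using cordial_triangles_k_plus_large by blast
  next
    case 4
    define s where "s = r - 2 * (2 * h + 1)"
    have "s \<le> 2 * h" "r = 2 * (2 * h + 1) + s"
      using 4 assms by (auto simp: s_def)
    then show ?thesis
      using cordial_triangles_2k_plus by blast
  qed
qed

theorem corollary12p3:
  fixes m n :: nat
  assumes "m \<ge> 1" and "odd m" and "3 dvd m"
  shows "is_cordial (integer_mod_group m) (friendship_vertices n) (friendship_edges n)"
proof -
  obtain k where "m = 3 * k"
    using assms(3) by (rule dvdE)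
  moreover from this have "odd k"
    using assms(2) by simp
  ultimately obtain h where m: "m = 3 * (2 * h + 1)"
    by (metis oddE)
  obtain L where "cordial_triangles m L (n mod m)"
    using cordial_triangles_below_modulus[of "n mod m" h] assms(1) m by auto
  then have "cordial_triangles m (periodic_extension m (n mod m) L) (n mod m + n div m * m)"
    by (rule cordial_triangles_periodic_extension[OF assms(2)])
  then show ?thesis
    using assms(1) by (simp add: is_cordial_friendship)
qed

end
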